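(* Let $\{\cdot,\cdot\}$ be an admissible Poisson bracket on $\widetilde J$. The following are equivalent: (1) there exist a nonzero admissible derivation $d$ of $\widetilde J$ and complex numbers $u,v$ such that, with $\kappa(k,p)=uk+vp$, one has $\{f,g\}=\kappa(k,p)f\,d(g)-\kappa(\ell,q)g\,d(f)$ for all $f\in\widetilde J_{k,p}$, $g\in\widetilde J_{\ell,q}$; (2) $\{\cdot,\cdot\}$ belongs to family (B), i.e. for some $\gamma,\lambda,\varepsilon\in\mathbb{C}$: $\{E_4,E_6\}=-2E_4^3+2E_6^2$, $\{A,E_4\}=(\varepsilon+\frac23)E_6A+\gamma E_4B$, $\{A,E_6\}=(\frac32\varepsilon+1)E_4^2A+\frac32\gamma E_6B$, $\{B,E_4\}=\lambda E_4^2A+\varepsilon E_6B$, $\{B,E_6\}=\frac32\lambda E_4E_6A+\frac32\varepsilon E_4^2B$, $\{A,B\}=(\frac34\varepsilon+\frac12)\lambda E_4A^2-\frac34\varepsilon\gamma B^2$. Moreover, in (1) necessarily $u\ne0$, $v=-3\varepsilon u$ (so $\kappa(k,p)=u(k-3\varepsilon p)$), and $d$ is given by $d(E_4)=-\frac1{3u}E_6$, $d(E_6)=-\frac1{2u}E_4^2$, $d(A)=-\frac\gamma{4u}B$, $d(B)=-\frac{\lambda}{4u}E_4A$; conversely, if (2) holds then for every $u\ne0$ the function $\kappa(k,p)=u(k-3\varepsilon p)$ and this derivation $d$ satisfy the identity in (1).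
   Context: Let $\widetilde J=\mathbb{C}[E_4,E_6,A,B]$ be the polynomial algebra in four algebraically independent variables, bigraded by weight and index, where $E_4$ has weight $4$ and index $0$, $E_6$ has weight $6$ and index $0$, $A$ has weight $-2$ and index $1$, $B$ has weight $0$ and index $1$; $\widetilde J_{k,p}$ denotes the homogeneous component of weight $k$ and index $p$. $\mathcal M_*=\mathbb{C}[E_4,E_6]$ with weight-$k$ part $\mathcal M_k$. The Serre derivation $S$ of $\mathcal M_*$ has $S(E_4)=-\frac13E_6$, $S(E_6)=-\frac12E_4^2$, and $\mathrm{RC}_1(f,g)=kfS(g)-\ell gS(f)$ for $f\in\mathcal M_k$, $g\in\mathcal M_\ell$. A Poisson bracket on $\widetilde J$ is admissible if (1) $\{f,g\}=\mathrm{RC}_1(f,g)$ for all $f,g\in\mathcal M_*$ and (2) $\{\widetilde J_{k,p},\widetilde J_{\ell,q}\}\subset\widetilde J_{k+\ell+2,p+q}$ for all weights and indices. A derivation of $\widetilde J$ is admissible if it maps each $\widetilde J_{k,p}$ into $\widetilde J_{k+2,p}$. *)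

theory Defs
  imports Complex_Main "HOL-Library.Poly_Mapping"
begin

datatype jvar = vE4 | vE6 | vA | vB

text \<open>Polynomials in the four variables: finitely supported maps from monomials
  (exponent vectors) to complex coefficients, with convolution product.\<close>
type_synonym jpoly = "(jvar \<Rightarrow>\<^sub>0 nat) \<Rightarrow>\<^sub>0 complex"

definition jconst :: "complex \<Rightarrow> jpoly" where
  "jconst c = Poly_Mapping.single 0 c"

definition jvarp :: "jvar \<Rightarrow> jpoly" where
  "jvarp x = Poly_Mapping.single (Poly_Mapping.single x 1) 1"

abbreviation "E4 \<equiv> jvarp vE4"
abbreviation "E6 \<equiv> jvarp vE6"
abbreviation "A \<equiv> jvarp vA"
abbreviation "B \<equiv> jvarp vB"

definition mweight :: "(jvar \<Rightarrow>\<^sub>0 nat) \<Rightarrow> int" where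
  "mweight m = 4 * int (Poly_Mapping.lookup m vE4) + 6 * int (Poly_Mapping.lookup m vE6) - 2 * int (Poly_Mapping.lookup m vA)"

definition mindex :: "(jvar \<Rightarrow>\<^sub>0 nat) \<Rightarrow> nat" where
  "mindex m = Poly_Mapping.lookup m vA + Poly_Mapping.lookup m vB"

text \<open>Homogeneous component of weight k and index p.  For p = 0 this is M_k.\<close>
definition Jhom :: "int \<Rightarrow> nat \<Rightarrow> jpoly set" where
  "Jhom k p = {f. \<forall>m\<in>Poly_Mapping.keys f. mweight m = k \<and> mindex m = p}"

definition pderivj :: "jvar \<Rightarrow> jpoly \<Rightarrow> jpoly" where
  "pderivj x f = (\<Sum>m\<in>Poly_Mapping.keys f. Poly_Mapping.single (m - Poly_Mapping.single x 1)
                                  (of_nat (Poly_Mapping.lookup m x) * Poly_Mapping.lookup f m))"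

definition serre :: "jpoly \<Rightarrow> jpoly" where
  "serre f = jconst (-1/3) * E6 * pderivj vE4 f + jconst (-1/2) * E4^2 * pderivj vE6 f"

definition RC1 :: "int \<Rightarrow> jpoly \<Rightarrow> int \<Rightarrow> jpoly \<Rightarrow> jpoly" where
  "RC1 k f l g = jconst (of_int k) * f * serre g - jconst (of_int l) * g * serre f"

definition poisson_bracket :: "(jpoly \<Rightarrow> jpoly \<Rightarrow> jpoly) \<Rightarrow> bool" where
  "poisson_bracket br \<longleftrightarrow>
     (\<forall>f g h. br (f + g) h = br f h + br g h) \<and>
     (\<forall>c f g. br (jconst c * f) g = jconst c * br f g) \<and>
     (\<forall>f g. br f g = - br g f) \<and>
     (\<forall>f g h. br f (g * h) = br f g * h + g * br f h) \<and>
     (\<forall>f g h. br f (br g h) + br g (br h f) + br h (br f g) = 0)"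

definition admissible_pb :: "(jpoly \<Rightarrow> jpoly \<Rightarrow> jpoly) \<Rightarrow> bool" where
  "admissible_pb br \<longleftrightarrow> poisson_bracket br \<and>
     (\<forall>k l f g. f \<in> Jhom k 0 \<longrightarrow> g \<in> Jhom l 0 \<longrightarrow> br f g = RC1 k f l g) \<and>
     (\<forall>k p l q f g. f \<in> Jhom k p \<longrightarrow> g \<in> Jhom l q \<longrightarrow> br f g \<in> Jhom (k + l + 2) (p + q))"

definition derivation :: "(jpoly \<Rightarrow> jpoly) \<Rightarrow> bool" where
  "derivation d \<longleftrightarrow>
     (\<forall>f g. d (f + g) = d f + d g) \<and>
     (\<forall>c f. d (jconst c * f) = jconst c * d f) \<and>
     (\<forall>f g. d (f * g) = f * d g + g * d f)"

definition admissible_derivation :: "(jpoly \<Rightarrow> jpoly) \<Rightarrow> bool" where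
  "admissible_derivation d \<longleftrightarrow> derivation d \<and>
     (\<forall>k p f. f \<in> Jhom k p \<longrightarrow> d f \<in> Jhom (k + 2) p)"

definition kappa_identity ::
  "(jpoly \<Rightarrow> jpoly \<Rightarrow> jpoly) \<Rightarrow> (jpoly \<Rightarrow> jpoly) \<Rightarrow> complex \<Rightarrow> complex \<Rightarrow> bool" where
  "kappa_identity br d u v \<longleftrightarrow>
     (\<forall>k p l q f g. f \<in> Jhom k p \<longrightarrow> g \<in> Jhom l q \<longrightarrow>
        br f g = jconst (u * of_int k + v * of_nat p) * f * d g
               - jconst (u * of_int l + v * of_nat q) * g * d f)"

definition cond1 :: "(jpoly \<Rightarrow> jpoly \<Rightarrow> jpoly) \<Rightarrow> bool" where
  "cond1 br \<longleftrightarrow> (\<exists>d u v. d \<noteq> (\<lambda>_. 0) \<and> admissible_derivation d \<and> kappa_identity br d u v)"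

definition familyB_params ::
  "(jpoly \<Rightarrow> jpoly \<Rightarrow> jpoly) \<Rightarrow> complex \<Rightarrow> complex \<Rightarrow> complex \<Rightarrow> bool" where
  "familyB_params br \<gamma> lam \<epsilon> \<longleftrightarrow>
     br E4 E6 = jconst (-2) * E4^3 + jconst 2 * E6^2 \<and>
     br A E4 = jconst (\<epsilon> + 2/3) * E6 * A + jconst \<gamma> * E4 * B \<and>
     br A E6 = jconst (3/2 * \<epsilon> + 1) * E4^2 * A + jconst (3/2 * \<gamma>) * E6 * B \<and>
     br B E4 = jconst lam * E4^2 * A + jconst \<epsilon> * E6 * B \<and>
     br B E6 = jconst (3/2 * lam) * E4 * E6 * A + jconst (3/2 * \<epsilon>) * E4^2 * B \<and>
     br A B = jconst ((3/4 * \<epsilon> + 1/2) * lam) * E4 * A^2 - jconst (3/4 * \<epsilon> * \<gamma>) * B^2"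

definition familyB :: "(jpoly \<Rightarrow> jpoly \<Rightarrow> jpoly) \<Rightarrow> bool" where
  "familyB br \<longleftrightarrow> (\<exists>\<gamma> lam \<epsilon>. familyB_params br \<gamma> lam \<epsilon>)"

end

theory Submission
  imports Defs
begin

text \<open>
  Homogeneity forces an admissible derivation to act on the generators as
  d E4 = a E6, d E6 = b E4^2, d A = c B, d B = e E4 A, because the relevant weight/index
  components are one-dimensional.  Write K for the Euler derivation f \<mapsto> \<kappa>(k,p) f on
  homogeneous f; the identity of (1) then says that the bracket equals the antisymmetric
  biderivation (f, g) \<mapsto> K f \<cdot> d g - K g \<cdot> d f, and two antisymmetric biderivations agree as
  soon as they agree on pairs of generators.  On the pair (E4, E6) the bracket is the
  Rankin--Cohen bracket, which forces u \<noteq> 0, a = -1/(3u), b = -1/(2u); on the remaining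
  pairs the identity is then literally family (B) with \<epsilon> = -v/(3u), \<gamma> = -4uc, \<lambda> = -4ue.
\<close>

lemma poly_mapping_update_eq_add_single:
  fixes f :: "'a \<Rightarrow>\<^sub>0 'b::comm_monoid_add"
  assumes "a \<notin> Poly_Mapping.keys f"
  shows "Poly_Mapping.update a b f = f + Poly_Mapping.single a b"
  using assms
  by (intro poly_mapping_eqI) (auto simp: lookup_update lookup_add lookup_single in_keys_iff when_def)

lemma poly_mapping_induct_single [case_names zero single add]:
  fixes f :: "'a \<Rightarrow>\<^sub>0 'b::comm_monoid_add"
  assumes "P 0" "\<And>m c. P (Poly_Mapping.single m c)" "\<And>f g. P f \<Longrightarrow> P g \<Longrightarrow> P (f + g)"
  shows "P f"
proof (induction f rule: update_induct)
  case const
  show ?case by (rule assms(1))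
next
  case (update f a b)
  then show ?case using assms(2,3) poly_mapping_update_eq_add_single by metis
qed

lemma exponent_induct [case_names zero add_var]:
  fixes m :: "'a \<Rightarrow>\<^sub>0 nat"
  assumes "P 0" "\<And>m x. P m \<Longrightarrow> P (m + Poly_Mapping.single x 1)"
  shows "P m"
proof (induction m rule: update_induct)
  case const
  then show ?case using assms(1) by simp
next
  case (update f a b)
  have "P (f + Poly_Mapping.single a n)" for n
  proof (induction n)
    case 0
    then show ?case using update(3) by simp
  next
    case (Suc n)
    then have "P ((f + Poly_Mapping.single a n) + Poly_Mapping.single a 1)" by (rule assms(2))
    then show ?case by (simp add: single_add[symmetric] add.assoc)
  qed
  then show ?case using poly_mapping_update_eq_add_single[OF update(1)] by simp
qed

lemma poly_mapping_sum_single: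
  "f = (\<Sum>m\<in>Poly_Mapping.keys f. Poly_Mapping.single m (Poly_Mapping.lookup f m))"
  by (rule poly_mapping_eqI) (simp add: lookup_sum lookup_single when_def in_keys_iff)

lemma jconst_add: "jconst a + jconst b = jconst (a + b)"
  by (simp add: jconst_def single_add)

lemma jconst_zero: "jconst 0 = 0"
  by (simp add: jconst_def)

lemma jconst_mult_single: "jconst c * Poly_Mapping.single m d = Poly_Mapping.single m (c * d)"
  by (simp add: jconst_def mult_single)

lemma single_eq_jconst_mult: "Poly_Mapping.single m c = jconst c * Poly_Mapping.single m 1"
  by (simp add: jconst_mult_single)

lemma single_add_var_eq_mult_jvarp:
  "Poly_Mapping.single (m + Poly_Mapping.single x 1) (1::complex) = Poly_Mapping.single m 1 * jvarp x"
  by (simp add: jvarp_def mult_single)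

lemma jpoly_eq_uminus_self: "(f::jpoly) = - f \<Longrightarrow> f = 0"
proof (rule poly_mapping_eqI)
  fix m assume "f = - f"
  then have "Poly_Mapping.lookup f m = - Poly_Mapping.lookup f m" by (metis lookup_uminus)
  then show "Poly_Mapping.lookup f m = Poly_Mapping.lookup 0 m" by simp
qed

section \<open>Derivations\<close>

context
  fixes d :: "jpoly \<Rightarrow> jpoly"
  assumes d: "derivation d"
begin

lemma derivation_add: "d (f + g) = d f + d g"
  using d unfolding derivation_def by blast

lemma derivation_jconst_mult: "d (jconst c * f) = jconst c * d f"
  using d unfolding derivation_def by blast

lemma derivation_mult: "d (f * g) = f * d g + g * d f"
  using d unfolding derivation_def by blast

lemma derivation_zero: "d 0 = 0"
  using derivation_add[of 0 0] by simp

lemma derivation_one: "d 1 = 0"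
  using derivation_mult[of 1 1] by simp

lemma derivation_jconst: "d (jconst c) = 0"
  using derivation_jconst_mult[of c 1] by (simp add: derivation_one)

lemma derivation_sum: "d (sum F S) = (\<Sum>x\<in>S. d (F x))"
  by (induction S rule: infinite_finite_induct) (simp_all add: derivation_zero derivation_add)

lemma derivation_expand:
  "d f = (\<Sum>m\<in>Poly_Mapping.keys f. jconst (Poly_Mapping.lookup f m) * d (Poly_Mapping.single m 1))"
  by (subst poly_mapping_sum_single)
    (simp add: derivation_sum single_eq_jconst_mult[of _ "Poly_Mapping.lookup f _"] derivation_jconst_mult)

end

lemma derivation_eqI:
  assumes d1: "derivation d1" and d2: "derivation d2"
    and vars: "\<And>x. d1 (jvarp x) = d2 (jvarp x)"
  shows "d1 f = d2 f"
proof -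
  have "d1 (Poly_Mapping.single m 1) = d2 (Poly_Mapping.single m 1)" for m
  proof (induction m rule: exponent_induct)
    case zero
    then show ?case using derivation_one[OF d1] derivation_one[OF d2] by simp
  next
    case (add_var m x)
    then show ?case
      by (simp only: single_add_var_eq_mult_jvarp derivation_mult[OF d1] derivation_mult[OF d2] vars)
  qed
  then show ?thesis by (simp only: derivation_expand[OF d1, of f] derivation_expand[OF d2, of f])
qed

lemma derivation_uminus: "derivation d \<Longrightarrow> derivation (\<lambda>f. - d f)"
  unfolding derivation_def by (metis (no_types, lifting) minus_add_distrib mult_minus_right)

lemma pderivj_single:
  "pderivj x (Poly_Mapping.single m c) =
     Poly_Mapping.single (m - Poly_Mapping.single x 1) (of_nat (Poly_Mapping.lookup m x) * c)"
  by (cases "c = 0") (simp_all add: pderivj_def)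

lemma pderivj_zero: "pderivj x 0 = 0"
  by (simp add: pderivj_def)

lemma pderivj_add: "pderivj x (f + g) = pderivj x f + pderivj x g"
  unfolding pderivj_def by (rule setsum_keys_plus_distrib) (simp_all add: single_add distrib_left)

lemma pderivj_jconst: "pderivj x (jconst c) = 0"
  by (simp add: jconst_def pderivj_single)

lemma single_add_diff_single:
  "Poly_Mapping.single (m + (n - Poly_Mapping.single x 1)) (of_nat (Poly_Mapping.lookup n x) * (c::complex))
   = Poly_Mapping.single (m + n - Poly_Mapping.single x 1) (of_nat (Poly_Mapping.lookup n x) * c)"
proof (cases "Poly_Mapping.lookup n x = 0")
  case False
  then have "m + (n - Poly_Mapping.single x 1) = m + n - Poly_Mapping.single x 1"
    by (intro poly_mapping_eqI) (auto simp: lookup_add lookup_minus lookup_single when_def)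
  then show ?thesis by simp
qed simp

lemma pderivj_mult_single:
  "pderivj x (Poly_Mapping.single m a * Poly_Mapping.single n b) =
     Poly_Mapping.single m a * pderivj x (Poly_Mapping.single n b)
     + Poly_Mapping.single n b * pderivj x (Poly_Mapping.single m a)"
proof -
  have left: "Poly_Mapping.single m a * pderivj x (Poly_Mapping.single n b) =
      Poly_Mapping.single (m + n - Poly_Mapping.single x 1) (of_nat (Poly_Mapping.lookup n x) * (a * b))"
    using single_add_diff_single[of m n x "a * b"] by (simp add: pderivj_single mult_single mult_ac)
  have right: "Poly_Mapping.single n b * pderivj x (Poly_Mapping.single m a) =
      Poly_Mapping.single (m + n - Poly_Mapping.single x 1) (of_nat (Poly_Mapping.lookup m x) * (a * b))"
    using single_add_diff_single[of n m x "a * b"]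
    by (simp add: pderivj_single mult_single mult_ac add.commute)
  show ?thesis
    unfolding left right
    by (simp add: mult_single pderivj_single lookup_add single_add[symmetric] distrib_right add.commute)
qed

lemma pderivj_mult: "pderivj x (f * g) = f * pderivj x g + g * pderivj x f"
proof (induction f rule: poly_mapping_induct_single)
  case (single m a)
  show ?case
    by (induction g rule: poly_mapping_induct_single)
      (simp_all add: pderivj_zero pderivj_mult_single distrib_left distrib_right pderivj_add)
qed (simp_all add: pderivj_zero distrib_left distrib_right pderivj_add)

lemma pderivj_jvarp: "pderivj y (jvarp x) = (if x = y then 1 else 0)"
  by (simp add: jvarp_def pderivj_single lookup_single when_def)

definition free_derivation :: "(jvar \<Rightarrow> jpoly) \<Rightarrow> jpoly \<Rightarrow> jpoly" where
  "free_derivation T f = pderivj vE4 f * T vE4 + pderivj vE6 f * T vE6 + pderivj vA f * T vA + pderivj vB f * T vB"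

lemma derivation_free_derivation: "derivation (free_derivation T)"
  unfolding derivation_def free_derivation_def
  by (simp add: pderivj_add pderivj_mult pderivj_jconst algebra_simps)

lemma free_derivation_jvarp [simp]: "free_derivation T (jvarp x) = T x"
  by (cases x) (simp_all add: free_derivation_def pderivj_jvarp)

section \<open>The bigrading\<close>

lemma mweight_add: "mweight (m + n) = mweight m + mweight n"
  by (simp add: mweight_def lookup_add algebra_simps)

lemma mindex_add: "mindex (m + n) = mindex m + mindex n"
  by (simp add: mindex_def lookup_add)

lemma mweight_zero [simp]: "mweight 0 = 0"
  by (simp add: mweight_def)

lemma mindex_zero [simp]: "mindex 0 = 0"
  by (simp add: mindex_def)

text \<open>Stated with Suc 0, the simp normal form of the exponent 1 in single x 1.\<close>

lemma mweight_var [simp]: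
  "mweight (Poly_Mapping.single vE4 (Suc 0)) = 4" "mweight (Poly_Mapping.single vE6 (Suc 0)) = 6"
  "mweight (Poly_Mapping.single vA (Suc 0)) = -2" "mweight (Poly_Mapping.single vB (Suc 0)) = 0"
  by (simp_all add: mweight_def lookup_single)

lemma mindex_var [simp]:
  "mindex (Poly_Mapping.single vE4 (Suc 0)) = 0" "mindex (Poly_Mapping.single vE6 (Suc 0)) = 0"
  "mindex (Poly_Mapping.single vA (Suc 0)) = 1" "mindex (Poly_Mapping.single vB (Suc 0)) = 1"
  by (simp_all add: mindex_def lookup_single)

lemma Jhom_zero: "0 \<in> Jhom k p"
  by (simp add: Jhom_def)

lemma Jhom_add: "f \<in> Jhom k p \<Longrightarrow> g \<in> Jhom k p \<Longrightarrow> f + g \<in> Jhom k p"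
  unfolding Jhom_def using keys_add[of f g] by auto

lemma Jhom_mult:
  assumes f: "f \<in> Jhom k p" and g: "g \<in> Jhom l q"
  shows "f * g \<in> Jhom (k + l) (p + q)"
  unfolding Jhom_def mem_Collect_eq
proof
  fix m assume "m \<in> Poly_Mapping.keys (f * g)"
  then obtain a b where "m = a + b" "a \<in> Poly_Mapping.keys f" "b \<in> Poly_Mapping.keys g"
    using keys_mult[of f g] by blast
  then show "mweight m = k + l \<and> mindex m = p + q"
    using f g unfolding Jhom_def by (simp add: mweight_add mindex_add)
qed

lemma Jhom_single: "Poly_Mapping.single m c \<in> Jhom (mweight m) (mindex m)"
  unfolding Jhom_def by simp

lemma Jhom_jconst_mult: "f \<in> Jhom k p \<Longrightarrow> jconst c * f \<in> Jhom k p"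
  using Jhom_mult[OF Jhom_single[of 0 c]] by (simp add: jconst_def mweight_def mindex_def)

lemma Jhom_sum: "(\<And>x. x \<in> S \<Longrightarrow> F x \<in> Jhom k p) \<Longrightarrow> sum F S \<in> Jhom k p"
  by (induction S rule: infinite_finite_induct) (simp_all add: Jhom_zero Jhom_add)

lemma Jhom_jvarp: "jvarp x \<in> Jhom (mweight (Poly_Mapping.single x 1)) (mindex (Poly_Mapping.single x 1))"
  unfolding jvarp_def by (rule Jhom_single)

lemma Jhom_generators: "E4 \<in> Jhom 4 0" "E6 \<in> Jhom 6 0" "A \<in> Jhom (-2) 1" "B \<in> Jhom 0 1"
  using Jhom_jvarp[of vE4] Jhom_jvarp[of vE6] Jhom_jvarp[of vA] Jhom_jvarp[of vB] by simp_all

lemma derivation_Jhom_shift: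
  assumes d: "derivation d"
    and vars: "\<And>x. d (jvarp x) \<in> Jhom (mweight (Poly_Mapping.single x 1) + s) (mindex (Poly_Mapping.single x 1))"
    and f: "f \<in> Jhom k p"
  shows "d f \<in> Jhom (k + s) p"
proof -
  have mono: "d (Poly_Mapping.single m 1) \<in> Jhom (mweight m + s) (mindex m)" for m
  proof (induction m rule: exponent_induct)
    case zero
    then show ?case using derivation_one[OF d] by (simp add: Jhom_zero)
  next
    case (add_var m x)
    have "Poly_Mapping.single m 1 * d (jvarp x) \<in> Jhom (mweight m + (mweight (Poly_Mapping.single x 1) + s))
        (mindex m + mindex (Poly_Mapping.single x 1))"
      by (rule Jhom_mult[OF Jhom_single vars])
    moreover have "jvarp x * d (Poly_Mapping.single m 1) \<in> Jhom (mweight (Poly_Mapping.single x 1) + (mweight m + s))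
        (mindex (Poly_Mapping.single x 1) + mindex m)"
      by (rule Jhom_mult[OF Jhom_jvarp add_var])
    ultimately show ?case
      unfolding single_add_var_eq_mult_jvarp derivation_mult[OF d] mweight_add mindex_add
      by (intro Jhom_add) (simp_all add: ac_simps)
  qed
  show ?thesis
    unfolding derivation_expand[OF d, of f]
    using f mono unfolding Jhom_def[of k p] by (intro Jhom_sum Jhom_jconst_mult) auto
qed

definition kappa :: "complex \<Rightarrow> complex \<Rightarrow> int \<Rightarrow> nat \<Rightarrow> complex" where
  "kappa u v k p = u * of_int k + v * of_nat p"

definition euler_derivation :: "complex \<Rightarrow> complex \<Rightarrow> jpoly \<Rightarrow> jpoly" where
  "euler_derivation u v = free_derivation (\<lambda>x.
     jconst (kappa u v (mweight (Poly_Mapping.single x 1)) (mindex (Poly_Mapping.single x 1))) * jvarp x)"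

lemma derivation_euler_derivation: "derivation (euler_derivation u v)"
  unfolding euler_derivation_def by (rule derivation_free_derivation)

lemma euler_derivation_Jhom:
  assumes f: "f \<in> Jhom k p"
  shows "euler_derivation u v f = jconst (kappa u v k p) * f"
proof -
  note K = derivation_euler_derivation[of u v]
  have mono: "euler_derivation u v (Poly_Mapping.single m 1)
      = jconst (kappa u v (mweight m) (mindex m)) * Poly_Mapping.single m 1" for m
  proof (induction m rule: exponent_induct)
    case zero
    then show ?case using derivation_one[OF K] by (simp add: kappa_def jconst_zero)
  next
    case (add_var m x)
    show ?case
      unfolding single_add_var_eq_mult_jvarp derivation_mult[OF K] add_var
      by (simp add: euler_derivation_def kappa_def mweight_add mindex_add jconst_add[symmetric]
          algebra_simps)
  qed
  have "euler_derivation u v f = (\<Sum>m\<in>Poly_Mapping.keys f.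
      jconst (kappa u v k p) * (jconst (Poly_Mapping.lookup f m) * Poly_Mapping.single m 1))"
    unfolding derivation_expand[OF K, of f] using f unfolding Jhom_def
    by (intro sum.cong) (auto simp: mono mult_ac)
  also have "\<dots> = jconst (kappa u v k p) * f"
    by (subst (2) poly_mapping_sum_single)
      (simp add: sum_distrib_left single_eq_jconst_mult[of _ "Poly_Mapping.lookup f _"])
  finally show ?thesis .
qed

lemma euler_derivation_jvarp:
  "euler_derivation u v (jvarp x)
     = jconst (kappa u v (mweight (Poly_Mapping.single x 1)) (mindex (Poly_Mapping.single x 1))) * jvarp x"
  by (rule euler_derivation_Jhom[OF Jhom_jvarp])

section \<open>Biderivations\<close>

context
  fixes br :: "jpoly \<Rightarrow> jpoly \<Rightarrow> jpoly"
  assumes pb: "poisson_bracket br"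
begin

lemma poisson_bracket_antisym: "br f g = - br g f"
  using pb unfolding poisson_bracket_def by blast

lemma poisson_bracket_self: "br f f = 0"
  using poisson_bracket_antisym[of f f] jpoly_eq_uminus_self by blast

lemma derivation_poisson_bracket: "derivation (br f)"
proof -
  have "br (g + h) f = br g f + br h f" "br (jconst c * g) f = jconst c * br g f"
    "br f (g * h) = br f g * h + g * br f h" for g h c
    using pb unfolding poisson_bracket_def by blast+
  then show ?thesis
    unfolding derivation_def
    by (simp add: poisson_bracket_antisym[of f] algebra_simps)
qed

end

lemma antisym_biderivation_eqI:
  assumes D1: "\<And>f. derivation (B1 f)" and D2: "\<And>f. derivation (B2 f)"
    and A1: "\<And>f g. B1 f g = - B1 g f" and A2: "\<And>f g. B2 f g = - B2 g f"
    and vars: "\<And>x y. B1 (jvarp x) (jvarp y) = B2 (jvarp x) (jvarp y)"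
  shows "B1 f g = B2 f g"
proof -
  have "(\<lambda>f. B1 f g) = (\<lambda>f. - B1 g f)" "(\<lambda>f. B2 f g) = (\<lambda>f. - B2 g f)"
    using A1 A2 by blast+
  then have "derivation (\<lambda>f. B1 f g)" "derivation (\<lambda>f. B2 f g)"
    using derivation_uminus[OF D1] derivation_uminus[OF D2] by simp_all
  moreover have "B1 (jvarp x) g = B2 (jvarp x) g" for x
    by (rule derivation_eqI[OF D1 D2 vars])
  ultimately show ?thesis by (rule derivation_eqI)
qed

definition derivation_wedge :: "(jpoly \<Rightarrow> jpoly) \<Rightarrow> (jpoly \<Rightarrow> jpoly) \<Rightarrow> jpoly \<Rightarrow> jpoly \<Rightarrow> jpoly" where
  "derivation_wedge K d f g = K f * d g - K g * d f"

lemma derivation_wedge_antisym: "derivation_wedge K d f g = - derivation_wedge K d g f"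
  by (simp add: derivation_wedge_def)

lemma derivation_derivation_wedge:
  assumes K: "derivation K" and d: "derivation d"
  shows "derivation (derivation_wedge K d f)"
  unfolding derivation_def derivation_wedge_def
  by (simp add: derivation_add[OF K] derivation_add[OF d] derivation_jconst[OF K] derivation_jconst[OF d]
      derivation_mult[OF K] derivation_mult[OF d] algebra_simps)

lemma kappa_identity_iff_generators:
  assumes pb: "poisson_bracket br" and d: "derivation d"
  shows "kappa_identity br d u v \<longleftrightarrow>
    (\<forall>x y. br (jvarp x) (jvarp y) = derivation_wedge (euler_derivation u v) d (jvarp x) (jvarp y))"
proof
  assume kap: "kappa_identity br d u v"
  show "\<forall>x y. br (jvarp x) (jvarp y) = derivation_wedge (euler_derivation u v) d (jvarp x) (jvarp y)"
  proof (intro allI)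
    fix x y
    show "br (jvarp x) (jvarp y) = derivation_wedge (euler_derivation u v) d (jvarp x) (jvarp y)"
      using kap Jhom_jvarp[of x] Jhom_jvarp[of y]
      unfolding kappa_identity_def derivation_wedge_def euler_derivation_jvarp kappa_def
      by (metis mult.assoc)
  qed
next
  assume vars: "\<forall>x y. br (jvarp x) (jvarp y) = derivation_wedge (euler_derivation u v) d (jvarp x) (jvarp y)"
  have "br f g = derivation_wedge (euler_derivation u v) d f g" for f g
    by (rule antisym_biderivation_eqI[OF derivation_poisson_bracket[OF pb]
        derivation_derivation_wedge[OF derivation_euler_derivation d]
        poisson_bracket_antisym[OF pb] derivation_wedge_antisym vars[rule_format]])
  then show "kappa_identity br d u v"
    unfolding kappa_identity_def derivation_wedge_def by (auto simp: euler_derivation_Jhom kappa_def)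
qed

definition jexp :: "nat \<Rightarrow> nat \<Rightarrow> nat \<Rightarrow> nat \<Rightarrow> (jvar \<Rightarrow>\<^sub>0 nat)" where
  "jexp a b c e = Poly_Mapping.single vE4 a + Poly_Mapping.single vE6 b
                  + Poly_Mapping.single vA c + Poly_Mapping.single vB e"

definition jterm :: "nat \<Rightarrow> nat \<Rightarrow> nat \<Rightarrow> nat \<Rightarrow> complex \<Rightarrow> jpoly" where
  "jterm a b c e z = Poly_Mapping.single (jexp a b c e) z"

lemma lookup_jexp [simp]:
  "Poly_Mapping.lookup (jexp a b c e) vE4 = a" "Poly_Mapping.lookup (jexp a b c e) vE6 = b"
  "Poly_Mapping.lookup (jexp a b c e) vA = c" "Poly_Mapping.lookup (jexp a b c e) vB = e"
  by (simp_all add: jexp_def lookup_add lookup_single)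

lemma jexp_lookup:
  "m = jexp (Poly_Mapping.lookup m vE4) (Poly_Mapping.lookup m vE6)
            (Poly_Mapping.lookup m vA) (Poly_Mapping.lookup m vB)"
proof (rule poly_mapping_eqI)
  fix x
  show "Poly_Mapping.lookup m x = Poly_Mapping.lookup (jexp (Poly_Mapping.lookup m vE4)
      (Poly_Mapping.lookup m vE6) (Poly_Mapping.lookup m vA) (Poly_Mapping.lookup m vB)) x"
    by (cases x) simp_all
qed

lemma jexp_eq_iff: "jexp a b c e = jexp a' b' c' e' \<longleftrightarrow> a = a' \<and> b = b' \<and> c = c' \<and> e = e'"
  by (metis lookup_jexp)

lemma jexp_add: "jexp a b c e + jexp a' b' c' e' = jexp (a + a') (b + b') (c + c') (e + e')"
  by (simp add: jexp_def single_add ac_simps)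

lemma jterm_mult [simp]:
  "jterm a b c e z * jterm a' b' c' e' z' = jterm (a + a') (b + b') (c + c') (e + e') (z * z')"
  by (simp add: jterm_def mult_single jexp_add)

lemma generators_eq_jterm: "E4 = jterm 1 0 0 0 1" "E6 = jterm 0 1 0 0 1" "A = jterm 0 0 1 0 1" "B = jterm 0 0 0 1 1"
  by (simp_all add: jterm_def jvarp_def jexp_def)

lemma jconst_eq_jterm: "jconst z = jterm 0 0 0 0 z"
  by (simp add: jterm_def jconst_def jexp_def)

lemma lookup_jterm_jexp:
  "Poly_Mapping.lookup (jterm a b c e z) (jexp a' b' c' e') = (if a = a' \<and> b = b' \<and> c = c' \<and> e = e' then z else 0)"
  by (simp add: jterm_def lookup_single when_def jexp_eq_iff eq_commute)

lemma lookup_jterm: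
  "Poly_Mapping.lookup (jterm a b c e z) m =
     (if Poly_Mapping.lookup m vE4 = a \<and> Poly_Mapping.lookup m vE6 = b
         \<and> Poly_Mapping.lookup m vA = c \<and> Poly_Mapping.lookup m vB = e then z else 0)"
  by (subst jexp_lookup[of m]) (simp add: lookup_jterm_jexp eq_commute)

lemmas jterm_normalize =
  generators_eq_jterm jconst_eq_jterm jterm_mult power2_eq_square power3_eq_cube ring_distribs

lemma Jhom_eq_single:
  assumes f: "f \<in> Jhom k p" and unique: "\<And>m. mweight m = k \<Longrightarrow> mindex m = p \<Longrightarrow> m = m0"
  shows "f = Poly_Mapping.single m0 (Poly_Mapping.lookup f m0)"
proof (rule poly_mapping_eqI)
  fix m
  have "m \<noteq> m0 \<Longrightarrow> m \<notin> Poly_Mapping.keys f" using f unique unfolding Jhom_def by blast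
  then show "Poly_Mapping.lookup f m = Poly_Mapping.lookup (Poly_Mapping.single m0 (Poly_Mapping.lookup f m0)) m"
    by (cases "m = m0") (simp_all add: in_keys_iff lookup_single)
qed

lemma monomial_of_weight_index:
  "mweight m = 6 \<Longrightarrow> mindex m = 0 \<Longrightarrow> m = jexp 0 1 0 0"
  "mweight m = 8 \<Longrightarrow> mindex m = 0 \<Longrightarrow> m = jexp 2 0 0 0"
  "mweight m = 0 \<Longrightarrow> mindex m = 1 \<Longrightarrow> m = jexp 0 0 0 1"
  "mweight m = 2 \<Longrightarrow> mindex m = 1 \<Longrightarrow> m = jexp 1 0 1 0"
  by (subst jexp_lookup, simp add: mweight_def mindex_def jexp_eq_iff, presburger)+

lemma admissible_derivation_generators:
  assumes "admissible_derivation d"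
  obtains a b c e where "d E4 = jconst a * E6" "d E6 = jconst b * E4^2"
    "d A = jconst c * B" "d B = jconst e * E4 * A"
proof
  have hom: "f \<in> Jhom k p \<Longrightarrow> d f \<in> Jhom (k + 2) p" for f k p
    using assms unfolding admissible_derivation_def by blast
  have "d E4 \<in> Jhom 6 0" "d E6 \<in> Jhom 8 0" "d A \<in> Jhom 0 1" "d B \<in> Jhom 2 1"
    using hom[OF Jhom_generators(1)] hom[OF Jhom_generators(2)] hom[OF Jhom_generators(3)]
      hom[OF Jhom_generators(4)] by simp_all
  note components = this[THEN Jhom_eq_single]
  have monomials: "Poly_Mapping.single (jexp 0 1 0 0) z = jconst z * E6"
    "Poly_Mapping.single (jexp 2 0 0 0) z = jconst z * E4^2"
    "Poly_Mapping.single (jexp 0 0 0 1) z = jconst z * B"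
    "Poly_Mapping.single (jexp 1 0 1 0) z = jconst z * E4 * A" for z
    by (simp_all add: jterm_normalize numeral_2_eq_2 flip: jterm_def)
  show "d E4 = jconst (Poly_Mapping.lookup (d E4) (jexp 0 1 0 0)) * E6"
    "d E6 = jconst (Poly_Mapping.lookup (d E6) (jexp 2 0 0 0)) * E4^2"
    "d A = jconst (Poly_Mapping.lookup (d A) (jexp 0 0 0 1)) * B"
    "d B = jconst (Poly_Mapping.lookup (d B) (jexp 1 0 1 0)) * E4 * A"
    unfolding monomials[symmetric]
    by (rule components(1) components(2) components(3) components(4);
        erule monomial_of_weight_index; assumption)+
qed

section \<open>Family (B)\<close>

lemma euler_derivation_generators:
  "euler_derivation u v E4 = jconst (4 * u) * E4" "euler_derivation u v E6 = jconst (6 * u) * E6"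
  "euler_derivation u v A = jconst (v - 2 * u) * A" "euler_derivation u v B = jconst v * B"
  by (simp_all add: euler_derivation_jvarp kappa_def algebra_simps)

lemma derivation_wedge_generators:
  assumes u: "u \<noteq> 0" and v: "v = -3 * \<epsilon> * u"
    and dE4: "d E4 = jconst (- 1 / (3 * u)) * E6" and dE6: "d E6 = jconst (- 1 / (2 * u)) * E4^2"
    and dA: "d A = jconst (- \<gamma> / (4 * u)) * B" and dB: "d B = jconst (- lam / (4 * u)) * E4 * A"
  defines "W \<equiv> derivation_wedge (euler_derivation u v) d"
  shows "W E4 E6 = jconst (-2) * E4^3 + jconst 2 * E6^2"
    and "W A E4 = jconst (\<epsilon> + 2/3) * E6 * A + jconst \<gamma> * E4 * B"
    and "W A E6 = jconst (3/2 * \<epsilon> + 1) * E4^2 * A + jconst (3/2 * \<gamma>) * E6 * B"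
    and "W B E4 = jconst lam * E4^2 * A + jconst \<epsilon> * E6 * B"
    and "W B E6 = jconst (3/2 * lam) * E4 * E6 * A + jconst (3/2 * \<epsilon>) * E4^2 * B"
    and "W A B = jconst ((3/4 * \<epsilon> + 1/2) * lam) * E4 * A^2 - jconst (3/4 * \<epsilon> * \<gamma>) * B^2"
  unfolding W_def derivation_wedge_def euler_derivation_generators dE4 dE6 dA dB v
  by (rule poly_mapping_eqI; simp add: jterm_normalize lookup_add lookup_minus lookup_jterm;
      auto simp: field_simps u)+

lemma familyB_params_iff_kappa_identity:
  assumes pb: "poisson_bracket br" and d: "derivation d" and u: "u \<noteq> 0"
    and dE4: "d E4 = jconst (- 1 / (3 * u)) * E6" and dE6: "d E6 = jconst (- 1 / (2 * u)) * E4^2"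
    and dA: "d A = jconst (- \<gamma> / (4 * u)) * B" and dB: "d B = jconst (- lam / (4 * u)) * E4 * A"
  shows "familyB_params br \<gamma> lam \<epsilon> \<longleftrightarrow> kappa_identity br d u (-3 * \<epsilon> * u)"
proof -
  define W where "W = derivation_wedge (euler_derivation u (-3 * \<epsilon> * u)) d"
  note W = derivation_wedge_generators[OF u refl dE4 dE6 dA dB, of \<epsilon>, folded W_def]
  have "familyB_params br \<gamma> lam \<epsilon> \<longleftrightarrow>
      br E4 E6 = W E4 E6 \<and> br A E4 = W A E4 \<and> br A E6 = W A E6 \<and>
      br B E4 = W B E4 \<and> br B E6 = W B E6 \<and> br A B = W A B"
    unfolding familyB_params_def W ..
  also have "\<dots> \<longleftrightarrow> (\<forall>x y. br (jvarp x) (jvarp y) = W (jvarp x) (jvarp y))"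
  proof
    assume six: "br E4 E6 = W E4 E6 \<and> br A E4 = W A E4 \<and> br A E6 = W A E6 \<and>
      br B E4 = W B E4 \<and> br B E6 = W B E6 \<and> br A B = W A B"
    have swap: "br g f = W g f" if "br f g = W f g" for f g
      using that poisson_bracket_antisym[OF pb, of g f] derivation_wedge_antisym[of _ _ g f]
      unfolding W_def by simp
    have diag: "br f f = W f f" for f
      by (simp add: poisson_bracket_self[OF pb] W_def derivation_wedge_def)
    show "\<forall>x y. br (jvarp x) (jvarp y) = W (jvarp x) (jvarp y)"
    proof (intro allI)
      fix x y
      show "br (jvarp x) (jvarp y) = W (jvarp x) (jvarp y)"
        using six swap diag by (cases x; cases y) simp_all
    qed
  qed simp
  also have "\<dots> \<longleftrightarrow> kappa_identity br d u (-3 * \<epsilon> * u)"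
    unfolding W_def by (rule kappa_identity_iff_generators[OF pb d, symmetric])
  finally show ?thesis .
qed

lemma familyB_params_unique:
  assumes "familyB_params br \<gamma> lam \<epsilon>" and "familyB_params br \<gamma>' lam' \<epsilon>'"
  shows "\<gamma>' = \<gamma> \<and> lam' = lam \<and> \<epsilon>' = \<epsilon>"
proof -
  have "jconst (\<epsilon> + 2/3) * E6 * A + jconst \<gamma> * E4 * B = jconst (\<epsilon>' + 2/3) * E6 * A + jconst \<gamma>' * E4 * B"
    "jconst lam * E4^2 * A + jconst \<epsilon> * E6 * B = jconst lam' * E4^2 * A + jconst \<epsilon>' * E6 * B"
    using assms unfolding familyB_params_def by metis+
  from this[THEN arg_cong, of "\<lambda>f. Poly_Mapping.lookup f (jexp 0 1 1 0)"]
    this[THEN arg_cong, of "\<lambda>f. Poly_Mapping.lookup f (jexp 1 0 0 1)"]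
    this[THEN arg_cong, of "\<lambda>f. Poly_Mapping.lookup f (jexp 2 0 1 0)"]
  show ?thesis by (simp add: jterm_normalize lookup_add lookup_jterm_jexp)
qed

lemma admissible_bracket_E4_E6:
  assumes "admissible_pb br"
  shows "br E4 E6 = jconst (-2) * E4^3 + jconst 2 * E6^2"
proof -
  have "br E4 E6 = RC1 4 E4 6 E6"
    using assms Jhom_generators unfolding admissible_pb_def by blast
  also have "\<dots> = jconst (-2) * E4^3 + jconst 2 * E6^2"
    unfolding RC1_def serre_def pderivj_jvarp
    by (rule poly_mapping_eqI; simp add: jterm_normalize lookup_add lookup_minus lookup_jterm)
  finally show ?thesis .
qed

lemma kappa_identity_E4_E6:
  assumes adm: "admissible_pb br" and d: "derivation d" and kap: "kappa_identity br d u v"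
    and dE4: "d E4 = jconst a * E6" and dE6: "d E6 = jconst b * E4^2"
  shows "u \<noteq> 0" "a = - 1 / (3 * u)" "b = - 1 / (2 * u)"
proof -
  have pb: "poisson_bracket br" using adm unfolding admissible_pb_def by blast
  have "derivation_wedge (euler_derivation u v) d E4 E6 = jconst (-2) * E4^3 + jconst 2 * E6^2"
    using kap admissible_bracket_E4_E6[OF adm]
    unfolding kappa_identity_iff_generators[OF pb d] by metis
  note coefficient = arg_cong[OF this, of "\<lambda>f. Poly_Mapping.lookup f m" for m,
      unfolded derivation_wedge_def euler_derivation_generators dE4 dE6]
  have coeffs: "2 * u * b = -1" "3 * u * a = -1"
    using coefficient[of "jexp 3 0 0 0"] coefficient[of "jexp 0 2 0 0"]
    by (simp_all add: jterm_normalize lookup_add lookup_minus lookup_jterm_jexp) algebra+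
  then show u: "u \<noteq> 0" by auto
  from coeffs show "a = - 1 / (3 * u)" "b = - 1 / (2 * u)"
    using u by (simp_all add: field_simps)
qed

lemma kappa_identity_familyB_params:
  assumes adm: "admissible_pb br" and ad: "admissible_derivation d" and kap: "kappa_identity br d u v"
  obtains \<gamma> lam \<epsilon> where "u \<noteq> 0" "v = -3 * \<epsilon> * u"
    "d E4 = jconst (- 1 / (3 * u)) * E6" "d E6 = jconst (- 1 / (2 * u)) * E4^2"
    "d A = jconst (- \<gamma> / (4 * u)) * B" "d B = jconst (- lam / (4 * u)) * E4 * A"
    "familyB_params br \<gamma> lam \<epsilon>"
proof -
  have pb: "poisson_bracket br" using adm unfolding admissible_pb_def by blast
  have d: "derivation d" using ad unfolding admissible_derivation_def by blast
  obtain a b c e where dE4: "d E4 = jconst a * E6" and dE6: "d E6 = jconst b * E4^2"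
    and dA: "d A = jconst c * B" and dB: "d B = jconst e * E4 * A"
    using admissible_derivation_generators[OF ad] .
  note solved = kappa_identity_E4_E6[OF adm d kap dE4 dE6]
  have u: "u \<noteq> 0" and dE4': "d E4 = jconst (- 1 / (3 * u)) * E6" and dE6': "d E6 = jconst (- 1 / (2 * u)) * E4^2"
    using solved dE4 dE6 by simp_all
  define \<gamma> where "\<gamma> = - 4 * u * c"
  define lam where "lam = - 4 * u * e"
  define \<epsilon> where "\<epsilon> = - v / (3 * u)"
  have dA': "d A = jconst (- \<gamma> / (4 * u)) * B" and dB': "d B = jconst (- lam / (4 * u)) * E4 * A"
    and v: "v = -3 * \<epsilon> * u"
    using u dA dB unfolding \<gamma>_def lam_def \<epsilon>_def by simp_all
  have "familyB_params br \<gamma> lam \<epsilon>"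
    using kap familyB_params_iff_kappa_identity[OF pb d u dE4' dE6' dA' dB'] v by simp
  with u v dE4' dE6' dA' dB' show ?thesis by (rule that)
qed

definition familyB_derivation :: "complex \<Rightarrow> complex \<Rightarrow> complex \<Rightarrow> jpoly \<Rightarrow> jpoly" where
  "familyB_derivation u \<gamma> lam = free_derivation (\<lambda>x. case x of
       vE4 \<Rightarrow> jconst (- 1 / (3 * u)) * E6
     | vE6 \<Rightarrow> jconst (- 1 / (2 * u)) * E4^2
     | vA \<Rightarrow> jconst (- \<gamma> / (4 * u)) * B
     | vB \<Rightarrow> jconst (- lam / (4 * u)) * E4 * A)"

lemma familyB_derivation_generators:
  "familyB_derivation u \<gamma> lam E4 = jconst (- 1 / (3 * u)) * E6"
  "familyB_derivation u \<gamma> lam E6 = jconst (- 1 / (2 * u)) * E4^2"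
  "familyB_derivation u \<gamma> lam A = jconst (- \<gamma> / (4 * u)) * B"
  "familyB_derivation u \<gamma> lam B = jconst (- lam / (4 * u)) * E4 * A"
  by (simp_all add: familyB_derivation_def)

lemma derivation_familyB_derivation: "derivation (familyB_derivation u \<gamma> lam)"
  unfolding familyB_derivation_def by (rule derivation_free_derivation)

lemma admissible_familyB_derivation: "admissible_derivation (familyB_derivation u \<gamma> lam)"
proof -
  have "familyB_derivation u \<gamma> lam (jvarp x)
      \<in> Jhom (mweight (Poly_Mapping.single x 1) + 2) (mindex (Poly_Mapping.single x 1))" for x
    using Jhom_mult[OF Jhom_generators(1) Jhom_generators(1)] Jhom_mult[OF Jhom_generators(1) Jhom_generators(3)]
      Jhom_generators
    by (cases x) (simp_all add: familyB_derivation_def power2_eq_square mult.assoc Jhom_jconst_mult)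
  then show ?thesis
    unfolding admissible_derivation_def
    using derivation_familyB_derivation derivation_Jhom_shift[OF derivation_familyB_derivation] by blast
qed

lemma familyB_derivation_nonzero:
  assumes "u \<noteq> 0"
  shows "familyB_derivation u \<gamma> lam \<noteq> (\<lambda>_. 0)"
proof
  assume "familyB_derivation u \<gamma> lam = (\<lambda>_. 0)"
  then have "Poly_Mapping.lookup (familyB_derivation u \<gamma> lam E4) (jexp 0 1 0 0) = 0" by simp
  with assms show False
    unfolding familyB_derivation_generators by (simp add: jterm_normalize lookup_jterm_jexp)
qed

lemma familyB_kappa_identity:
  assumes "admissible_pb br" and "familyB_params br \<gamma> lam \<epsilon>" and "u \<noteq> 0"
  shows "kappa_identity br (familyB_derivation u \<gamma> lam) u (-3 * \<epsilon> * u)"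
proof -
  have "poisson_bracket br" using assms(1) unfolding admissible_pb_def by blast
  from familyB_params_iff_kappa_identity[OF this derivation_familyB_derivation assms(3)
      familyB_derivation_generators] assms(2)
  show ?thesis ..
qed

theorem mainTheorem8:
  fixes br :: "jpoly \<Rightarrow> jpoly \<Rightarrow> jpoly"
  assumes "admissible_pb br"
  shows "(cond1 br \<longleftrightarrow> familyB br) \<and>
    (\<forall>\<gamma> lam \<epsilon> d u v. familyB_params br \<gamma> lam \<epsilon> \<longrightarrow>
        d \<noteq> (\<lambda>_. 0) \<longrightarrow> admissible_derivation d \<longrightarrow> kappa_identity br d u v \<longrightarrow>
        u \<noteq> 0 \<and> v = -3 * \<epsilon> * u \<and>
        d E4 = jconst (- 1 / (3 * u)) * E6 \<and>
        d E6 = jconst (- 1 / (2 * u)) * E4^2 \<and>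
        d A = jconst (- \<gamma> / (4 * u)) * B \<and>
        d B = jconst (- lam / (4 * u)) * E4 * A) \<and>
    (\<forall>\<gamma> lam \<epsilon> u. familyB_params br \<gamma> lam \<epsilon> \<longrightarrow> u \<noteq> 0 \<longrightarrow>
        (\<exists>d. admissible_derivation d \<and>
           d E4 = jconst (- 1 / (3 * u)) * E6 \<and>
           d E6 = jconst (- 1 / (2 * u)) * E4^2 \<and>
           d A = jconst (- \<gamma> / (4 * u)) * B \<and>
           d B = jconst (- lam / (4 * u)) * E4 * A \<and>
           kappa_identity br d u (-3 * \<epsilon> * u)))"
proof -
  have "familyB br \<Longrightarrow> cond1 br"
    unfolding familyB_def cond1_def
    by (metis familyB_kappa_identity[OF assms] familyB_derivation_nonzero one_neq_zero
        admissible_familyB_derivation)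
  moreover have "cond1 br \<Longrightarrow> familyB br"
    unfolding cond1_def familyB_def by (metis kappa_identity_familyB_params[OF assms])
  moreover have "u \<noteq> 0 \<and> v = -3 * \<epsilon> * u \<and> d E4 = jconst (- 1 / (3 * u)) * E6 \<and>
      d E6 = jconst (- 1 / (2 * u)) * E4^2 \<and> d A = jconst (- \<gamma> / (4 * u)) * B \<and>
      d B = jconst (- lam / (4 * u)) * E4 * A"
    if "familyB_params br \<gamma> lam \<epsilon>" "admissible_derivation d" "kappa_identity br d u v" for \<gamma> lam \<epsilon> d u v
    using kappa_identity_familyB_params[OF assms that(2,3)] familyB_params_unique[OF _ that(1)] by metis
  ultimately show ?thesis
    using familyB_kappa_identity[OF assms] admissible_familyB_derivation familyB_derivation_generators
    by blast
qed

end
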